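(* Let $0<\alpha\leq 1/2$ and let $\lambda_*(\alpha)$ be as defined below. There exists a non-trivial function $\omega=(\omega_1,\omega_2)$, with $\omega_1$ on $[0,2\pi]$ and $\omega_2$ on $[1,\infty)$, such that $$\left(-i\frac{d}{d\theta} -\alpha\right)^2\omega_1 = \lambda_*(\alpha)\, \omega_1 \text{ on } (0,2\pi),\qquad -\frac{d^2}{dr^2}\omega_2 = \frac{\lambda_*(\alpha)}{r^2}\,\omega_2 \text{ on } (1,\infty),$$ $$\omega_1(0)=\omega_1(2\pi)=\omega_2(1),\qquad \omega_1'(0)-\omega_1'(2\pi)+\omega_2'(1)=0,$$ and moreover: (1) if $0<\alpha<1/2$, then $\omega$ vanishes nowhere on $\Gamma$; if $\alpha=1/2$, then $\omega$ vanishes exactly at the point $(-1,0)\in\Gamma_1$ (i.e. $\theta=\pi$); (2) $\omega_2$ is real-valued, and the function $j:=\operatorname{Re}\overline{\omega_1}\left(-i\frac{d}{d\theta}-\alpha\right)\omega_1$ on $(0,2\pi)$ is constant, equal to $$j= - \sqrt{\lambda_*(\alpha)}\, \frac{\sin(2\pi\alpha)}{\sin(2\pi\sqrt{\lambda_*(\alpha)})};$$ (3) if $0<\alpha<1/2$, then $$\int_0^{2\pi} \frac{d\theta}{|\omega_1(\theta)|^2} = \frac{2\pi\alpha}{\sqrt{\lambda_*(\alpha)}}\, \frac{\sin(2\pi\sqrt{\lambda_*(\alpha)})}{\sin(2\pi\alpha)}.$$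
   Context: $\Gamma=\Gamma_1\cup\Gamma_2$ with $\Gamma_1$ the unit circle in $\mathbb{R}^2$ parametrized by $\theta\mapsto e^{i\theta}$, $\theta\in[0,2\pi]$, and $\Gamma_2=\{(r,0):r>1\}$ parametrized by $r$; $\omega_1,\omega_2$ are the restrictions of $\omega$ to $\Gamma_1,\Gamma_2$ in these parametrizations. For $0<\alpha\le1/2$, $\lambda_*(\alpha)$ is the unique solution $\lambda\in(0,\alpha^2)$ of $\cos(2\pi\alpha)=\cos(2\pi\sqrt\lambda)-\frac{1-\sqrt{1-4\lambda}}{4\sqrt\lambda}\sin(2\pi\sqrt\lambda)$. *)

theory Defs
  imports "HOL-Analysis.Analysis"
begin

definition lambda_eq :: "real \<Rightarrow> real \<Rightarrow> bool" where
  "lambda_eq \<alpha> l \<longleftrightarrow>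
     cos (2*pi*\<alpha>) = cos (2*pi * sqrt l)
        - (1 - sqrt (1 - 4*l)) / (4 * sqrt l) * sin (2*pi * sqrt l)"

definition lambda_star :: "real \<Rightarrow> real" where
  "lambda_star \<alpha> = (THE l. 0 < l \<and> l < \<alpha>\<^sup>2 \<and> lambda_eq \<alpha> l)"

end

theory Submission
  imports Defs
begin

text \<open>Write \<open>\<lambda> = m\<^sup>2\<close>. On the circle \<open>\<omega>\<^sub>1(\<theta>) = e\<^sup>i\<^sup>\<alpha>\<^sup>\<theta> (cos m\<theta> + B sin m\<theta>)\<close>, with \<open>B\<close>
  chosen so that \<open>\<omega>\<^sub>1(2\<pi>) = \<omega>\<^sub>1(0) = 1\<close>; on the half line \<open>\<omega>\<^sub>2(r) = r\<^sup>s\<close> with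
  \<open>s(s - 1) = -m\<^sup>2\<close>, taking the smaller root \<open>s = (1 - \<surd>(1 - 4m\<^sup>2))/2\<close>. With these choices the
  Kirchhoff condition at the vertex is exactly the equation defining \<open>\<lambda>\<^sub>*(\<alpha>)\<close>, which has a
  unique root \<open>m \<in> (0, \<alpha>)\<close>: the intermediate value theorem gives one, and on a root
  \<open>s/(2m) = (cos 2\<pi>m - cos 2\<pi>\<alpha>)/sin 2\<pi>m\<close> with the left side increasing and the right side
  decreasing in \<open>m\<close>.

  The current is the Wronskian \<open>m Im B\<close>, hence constant. For \<open>\<alpha> < 1/2\<close> one has \<open>Im B < 0\<close>,
  so \<open>U = cos m\<theta> + B sin m\<theta>\<close> stays in the lower half plane and never vanishes, and
  \<open>1/|U|\<^sup>2 = Im (U'/U) / (m Im B)\<close> integrates to the change of \<open>arg U\<close>, namely \<open>-2\<pi>\<alpha>\<close>.\<close>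

text \<open>\<open>lambda_eq\<close> at \<open>l = m\<^sup>2\<close> involves \<open>(1 - \<surd>(1 - 4m\<^sup>2))/(4m) = m/(1 + \<surd>(1 - 4m\<^sup>2))\<close>;
  the second form is continuous at \<open>m = 0\<close>.\<close>

definition char_coeff :: "real \<Rightarrow> real" where
  "char_coeff m = m / (1 + sqrt (1 - 4*m\<^sup>2))"

definition char_fun :: "real \<Rightarrow> real \<Rightarrow> real" where
  "char_fun a m = cos (2*pi*m) - char_coeff m * sin (2*pi*m) - cos (2*pi*a)"

definition radial_exponent :: "real \<Rightarrow> real" where
  "radial_exponent m = (1 - sqrt (1 - 4*m\<^sup>2)) / 2"

lemma four_sq_le_one: "\<bar>m\<bar> \<le> 1/2 \<Longrightarrow> 4 * m\<^sup>2 \<le> (1::real)"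
  using abs_le_square_iff[of m "1/2"] by (simp add: power2_eq_square)

lemma radial_exponent_eq:
  assumes "\<bar>m\<bar> \<le> 1/2"
  shows "radial_exponent m = 2 * m * char_coeff m"
proof -
  define S where "S = sqrt (1 - 4*m\<^sup>2)"
  have S: "S\<^sup>2 = 1 - 4*m\<^sup>2" "S \<ge> 0" using four_sq_le_one[OF assms] by (auto simp: S_def)
  hence "(1 - S) * (1 + S) = 4 * m\<^sup>2" by (simp add: algebra_simps power2_eq_square)
  hence "(1 - S) / 2 = 2 * m * (m / (1 + S))" using S(2) by (simp add: field_simps power2_eq_square)
  thus ?thesis unfolding radial_exponent_def char_coeff_def S_def[symmetric] .
qed

lemma radial_exponent_quadratic:
  assumes "\<bar>m\<bar> \<le> 1/2"
  shows "radial_exponent m * (radial_exponent m - 1) = - m\<^sup>2"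
  using real_sqrt_pow2[of "1 - 4*m\<^sup>2"] four_sq_le_one[OF assms]
  by (simp add: radial_exponent_def field_simps power2_eq_square)

lemma lambda_eq_sq_iff:
  assumes "0 < m" "m < 1/2"
  shows "lambda_eq a (m\<^sup>2) \<longleftrightarrow> char_fun a m = 0"
proof -
  have "(1 - sqrt (1 - 4*m\<^sup>2)) / (4 * m) = char_coeff m"
    using radial_exponent_eq[of m] assms by (simp add: radial_exponent_def field_simps)
  thus ?thesis using assms by (auto simp: lambda_eq_def char_fun_def)
qed

lemma char_coeff_pos: "0 < m \<Longrightarrow> m \<le> 1/2 \<Longrightarrow> 0 < char_coeff m"
  using four_sq_le_one[of m] by (simp add: char_coeff_def add_pos_nonneg)

lemma char_coeff_strict_mono:
  assumes "0 < m" "m < n" "n < 1/2"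
  shows "char_coeff m < char_coeff n"
proof -
  have mn: "m\<^sup>2 < n\<^sup>2" using assms by (simp add: power_strict_mono)
  have q: "4*n\<^sup>2 \<le> 1" "4*m\<^sup>2 \<le> 1" using assms four_sq_le_one[of m] four_sq_le_one[of n] by auto
  have "sqrt (1 - 4*n\<^sup>2) < sqrt (1 - 4*m\<^sup>2)" using mn by simp
  hence "m * (1 + sqrt (1 - 4*n\<^sup>2)) < n * (1 + sqrt (1 - 4*m\<^sup>2))"
    using assms q mult_mono[of m n "sqrt (1 - 4*n\<^sup>2)" "sqrt (1 - 4*m\<^sup>2)"]
    by (simp add: algebra_simps)
  moreover have "0 < 1 + sqrt (1 - 4*n\<^sup>2)" "0 < 1 + sqrt (1 - 4*m\<^sup>2)"
    using q by (auto intro: add_pos_nonneg)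
  ultimately show ?thesis unfolding char_coeff_def by (simp add: divide_simps)
qed

lemma cos_minus_div_sin_strict_antimono:
  fixes c x y :: real
  assumes "0 < x" "x < y" "y < pi" "\<bar>c\<bar> \<le> 1"
  shows "(cos y - c) / sin y < (cos x - c) / sin x"
proof (rule DERIV_neg_imp_decreasing[OF \<open>x < y\<close>])
  fix t assume t: "x \<le> t" "t \<le> y"
  have st: "sin t > 0" using assms t by (intro sin_gt_zero) auto
  have "(sin t)\<^sup>2 > 0" using st by simp
  hence "(cos t)\<^sup>2 < 1" using sin_cos_squared_add[of t] by linarith
  have "c * cos t \<le> \<bar>c\<bar> * \<bar>cos t\<bar>" by (metis abs_ge_self abs_mult)
  also have "\<dots> \<le> \<bar>cos t\<bar>" using assms(4) by (simp add: mult_left_le_one_le)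
  also have "\<dots> < 1" using \<open>(cos t)\<^sup>2 < 1\<close> by (simp add: abs_square_less_1)
  finally have "c * cos t < 1" .
  hence "- sin t * sin t - (cos t - c) * cos t < 0"
    using sin_cos_squared_add[of t] by (simp add: power2_eq_square algebra_simps)
  moreover have "((\<lambda>t. (cos t - c) / sin t) has_real_derivative
      (- sin t * sin t - (cos t - c) * cos t) / (sin t)\<^sup>2) (at t)"
    using st by (auto intro!: derivative_eq_intros simp: power2_eq_square)
  ultimately show "\<exists>d. ((\<lambda>t. (cos t - c) / sin t) has_real_derivative d) (at t) \<and> d < 0"
    using st by (auto simp: divide_neg_pos)
qed

lemma char_fun_root_unique:
  assumes "0 < m" "m < 1/2" "0 < n" "n < 1/2" "char_fun a m = 0" "char_fun a n = 0"
  shows "m = n"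
proof -
  have False if "0 < p" "p < q" "q < 1/2" "char_fun a p = 0" "char_fun a q = 0" for p q
  proof -
    have "sin (2*pi*p) > 0" "sin (2*pi*q) > 0" using that by (auto intro!: sin_gt_zero)
    hence "char_coeff p = (cos (2*pi*p) - cos (2*pi*a)) / sin (2*pi*p)"
      "char_coeff q = (cos (2*pi*q) - cos (2*pi*a)) / sin (2*pi*q)"
      using that by (auto simp: char_fun_def field_simps)
    moreover have "(cos (2*pi*q) - cos (2*pi*a)) / sin (2*pi*q)
        < (cos (2*pi*p) - cos (2*pi*a)) / sin (2*pi*p)"
      using that by (intro cos_minus_div_sin_strict_antimono) auto
    ultimately show False using char_coeff_strict_mono[of p q] that by simp
  qed
  thus ?thesis using assms by (metis linorder_neqE_linordered_idom)
qed

lemma continuous_on_char_fun: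
  assumes "b \<le> 1/2"
  shows "continuous_on {0..b} (char_fun a)"
proof -
  have "1 + sqrt (1 - 4*m\<^sup>2) \<noteq> 0" if "m \<in> {0..b}" for m
  proof -
    have "\<bar>m\<bar> \<le> 1/2" using that assms by auto
    hence "0 \<le> sqrt (1 - 4*m\<^sup>2)" using four_sq_le_one by simp
    thus ?thesis by linarith
  qed
  thus ?thesis unfolding char_fun_def char_coeff_def by (intro continuous_intros) auto
qed

lemma char_fun_zero_pos: "0 < a \<Longrightarrow> a \<le> 1/2 \<Longrightarrow> 0 < char_fun a 0"
  using cos_monotone_0_pi[of 0 "2*pi*a"] by (simp add: char_fun_def char_coeff_def)

lemma char_fun_self_neg: "0 < a \<Longrightarrow> a < 1/2 \<Longrightarrow> char_fun a a < 0"
  using char_coeff_pos[of a] sin_gt_zero[of "2*pi*a"] by (simp add: char_fun_def)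

lemma char_fun_half_neg: "char_fun (1/2) (5/12) < 0"
proof -
  have "cos (2*pi*(5/12)) = - (sqrt 3 / 2)" "sin (2*pi*(5/12)) = 1/2"
    using cos_pi_minus[of "pi/6"] sin_pi_minus[of "pi/6"] cos_30 sin_30
    by (simp_all add: field_simps)
  hence "char_fun (1/2) (5/12) = 1 - sqrt 3 / 2 - char_coeff (5/12) / 2"
    by (simp add: char_fun_def)
  moreover have "1732/1000 \<le> sqrt 3" by (rule real_le_rsqrt) (simp add: power2_eq_square)
  moreover have "(5/12) / (1 + 5528/10000) \<le> char_coeff (5/12)"
  proof -
    have "sqrt (1 - 4*(5/12::real)\<^sup>2) \<le> sqrt ((5528/10000)\<^sup>2)"
      by (subst real_sqrt_le_iff) (simp add: power2_eq_square)
    hence "sqrt (1 - 4*(5/12::real)\<^sup>2) \<le> 5528/10000" by simp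
    moreover have "0 \<le> sqrt (1 - 4*(5/12::real)\<^sup>2)"
      by (rule real_sqrt_ge_zero) (simp add: power2_eq_square)
    ultimately show ?thesis
      unfolding char_coeff_def by (intro divide_left_mono mult_pos_pos; linarith)
  qed
  ultimately show ?thesis by simp
qed

lemma lambda_star_eq_root:
  assumes "0 < a" "a \<le> 1/2"
  obtains m where "0 < m" "m < 1/2" "char_fun a m = 0" "lambda_star a = m\<^sup>2"
proof -
  obtain b where b: "0 < b" "b < 1/2" "b \<le> a" "char_fun a b < 0"
  proof (cases "a < 1/2")
    case True
    with assms char_fun_self_neg show ?thesis by (intro that[of a]) auto
  next
    case False
    with assms have "a = 1/2" by simp
    show ?thesis using char_fun_half_neg by (intro that[of "5/12"]) (auto simp: \<open>a = 1/2\<close>)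
  qed
  obtain m where m: "0 \<le> m" "m \<le> b" "char_fun a m = 0"
    using IVT2'[of "char_fun a" b 0 0] b char_fun_zero_pos[OF assms] continuous_on_char_fun[of b a]
    by auto
  have m': "0 < m" "m < b" using m b char_fun_zero_pos[OF assms] by (auto simp: order.order_iff_strict)
  have "lambda_star a = m\<^sup>2"
    unfolding lambda_star_def
  proof (rule the_equality)
    show "0 < m\<^sup>2 \<and> m\<^sup>2 < a\<^sup>2 \<and> lambda_eq a (m\<^sup>2)"
      using m m' b lambda_eq_sq_iff[of m a] by (auto intro: power_strict_mono)
  next
    fix l assume l: "0 < l \<and> l < a\<^sup>2 \<and> lambda_eq a l"
    hence "0 < sqrt l" "sqrt l < 1/2" using assms real_sqrt_less_mono[of l "a\<^sup>2"] by auto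
    moreover from this l have "char_fun a (sqrt l) = 0"
      using lambda_eq_sq_iff[of "sqrt l" a] by simp
    ultimately have "sqrt l = m" using char_fun_root_unique m m' b by force
    thus "l = m\<^sup>2" using l by auto
  qed
  with m m' b that show ?thesis by force
qed

definition trig_sol :: "real \<Rightarrow> complex \<Rightarrow> complex \<Rightarrow> complex" where
  "trig_sol m B z = cos (of_real m * z) + B * sin (of_real m * z)"

definition trig_sol_deriv :: "real \<Rightarrow> complex \<Rightarrow> complex \<Rightarrow> complex" where
  "trig_sol_deriv m B z = of_real m * (B * cos (of_real m * z) - sin (of_real m * z))"

definition magnetic_sol :: "real \<Rightarrow> real \<Rightarrow> complex \<Rightarrow> complex \<Rightarrow> complex" where
  "magnetic_sol a m B z = exp (\<i> * of_real a * z) * trig_sol m B z"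

definition magnetic_sol_deriv :: "real \<Rightarrow> real \<Rightarrow> complex \<Rightarrow> complex \<Rightarrow> complex" where
  "magnetic_sol_deriv a m B z =
     exp (\<i> * of_real a * z) * (\<i> * of_real a * trig_sol m B z + trig_sol_deriv m B z)"

definition magnetic_sol_deriv2 :: "real \<Rightarrow> real \<Rightarrow> complex \<Rightarrow> complex \<Rightarrow> complex" where
  "magnetic_sol_deriv2 a m B z =
     exp (\<i> * of_real a * z) * (- of_real (a\<^sup>2 + m\<^sup>2) * trig_sol m B z
       + 2 * \<i> * of_real a * trig_sol_deriv m B z)"

lemma trig_sol_has_field_derivative:
  "(trig_sol m B has_field_derivative trig_sol_deriv m B z) (at z)"
  unfolding trig_sol_def trig_sol_deriv_def
  by (auto intro!: derivative_eq_intros simp: algebra_simps)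

lemma trig_sol_deriv_has_field_derivative:
  "(trig_sol_deriv m B has_field_derivative - (of_real m)\<^sup>2 * trig_sol m B z) (at z)"
  unfolding trig_sol_def trig_sol_deriv_def
  by (auto intro!: derivative_eq_intros simp: algebra_simps power2_eq_square)

lemma magnetic_sol_has_field_derivative:
  "(magnetic_sol a m B has_field_derivative magnetic_sol_deriv a m B z) (at z)"
  unfolding magnetic_sol_def magnetic_sol_deriv_def
  by (auto intro!: derivative_eq_intros trig_sol_has_field_derivative simp: algebra_simps)

lemma magnetic_sol_deriv_has_field_derivative:
  "(magnetic_sol_deriv a m B has_field_derivative magnetic_sol_deriv2 a m B z) (at z)"
  unfolding magnetic_sol_deriv_def magnetic_sol_deriv2_def
  by (auto intro!: derivative_eq_intros trig_sol_has_field_derivative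
      trig_sol_deriv_has_field_derivative simp: algebra_simps power2_eq_square)

lemma magnetic_sol_ode:
  "- magnetic_sol_deriv2 a m B z + 2 * \<i> * of_real a * magnetic_sol_deriv a m B z
     + of_real (a\<^sup>2) * magnetic_sol a m B z = of_real (m\<^sup>2) * magnetic_sol a m B z"
  unfolding magnetic_sol_deriv2_def magnetic_sol_deriv_def magnetic_sol_def
  by (simp add: algebra_simps power2_eq_square)

lemma trig_sol_of_real:
  "trig_sol m B (of_real t) = of_real (cos (m * t)) + B * of_real (sin (m * t))"
  by (simp add: trig_sol_def flip: cos_of_real sin_of_real)

lemma trig_sol_deriv_of_real:
  "trig_sol_deriv m B (of_real t) = of_real m * (B * of_real (cos (m * t)) - of_real (sin (m * t)))"
  by (simp add: trig_sol_deriv_def flip: cos_of_real sin_of_real)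

lemma magnetic_sol_of_real:
  "magnetic_sol a m B (of_real t) = cis (a * t) * trig_sol m B (of_real t)"
  by (simp add: magnetic_sol_def cis_conv_exp mult.assoc)

lemma Im_trig_sol_of_real: "Im (trig_sol m B (of_real t)) = Im B * sin (m * t)"
  by (simp add: trig_sol_of_real)

lemma trig_sol_wronskian:
  "Im (cnj (trig_sol m B (of_real t)) * trig_sol_deriv m B (of_real t)) = m * Im B"
proof -
  have "Im (cnj (of_real c + B * of_real s) * (of_real m * (B * of_real c - of_real s)))
      = m * Im B * (c\<^sup>2 + s\<^sup>2)" for c s :: real
    by (simp add: algebra_simps power2_eq_square)
  thus ?thesis unfolding trig_sol_of_real trig_sol_deriv_of_real by simp
qed

lemma magnetic_sol_current:
  "Re (cnj (magnetic_sol a m B (of_real t))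
       * (- \<i> * magnetic_sol_deriv a m B (of_real t) - of_real a * magnetic_sol a m B (of_real t)))
     = m * Im B"
proof -
  define U V where "U = trig_sol m B (of_real t)" and "V = trig_sol_deriv m B (of_real t)"
  have "exp (\<i> * of_real a * of_real t) = cis (a * t)" by (simp add: cis_conv_exp mult.assoc)
  hence "cnj (magnetic_sol a m B (of_real t))
       * (- \<i> * magnetic_sol_deriv a m B (of_real t) - of_real a * magnetic_sol a m B (of_real t))
      = (cnj (cis (a*t)) * cis (a*t)) * (- \<i> * (cnj U * V))"
    by (simp add: magnetic_sol_def magnetic_sol_deriv_def U_def V_def algebra_simps)
  also have "cnj (cis (a*t)) * cis (a*t) = 1" by (simp add: cis_cnj cis_mult)
  finally show ?thesis using trig_sol_wronskian[of m B t] by (simp add: U_def V_def)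
qed

lemma radial_power_ode:
  fixes s m r :: real
  assumes "s * (s - 1) = - m\<^sup>2" "0 < r"
  shows "- (of_real (s * (s - 1) * r powr (s - 2)) :: complex)
    = of_real (m\<^sup>2 / r\<^sup>2) * of_real (r powr s)"
proof -
  have "- (s * (s - 1) * r powr (s - 2)) = m\<^sup>2 / r\<^sup>2 * r powr s"
    using assms by (simp add: powr_diff powr_numeral)
  thus ?thesis by (metis of_real_minus of_real_mult)
qed

lemma has_vector_derivative_of_real_powr:
  "0 < r \<Longrightarrow> ((\<lambda>r. of_real (r powr s) :: complex) has_vector_derivative
     of_real (s * r powr (s - 1))) (at r within X)"
  by (auto intro!: derivative_eq_intros)

lemma has_vector_derivative_of_real_powr_deriv:
  "0 < r \<Longrightarrow> ((\<lambda>r. of_real (s * r powr (s - 1)) :: complex) has_vector_derivative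
     of_real (s * (s - 1) * r powr (s - 2))) (at r within X)"
  by (auto intro!: derivative_eq_intros simp: algebra_simps)

definition boundary_coeff :: "real \<Rightarrow> real \<Rightarrow> complex" where
  "boundary_coeff a m = (cis (- (2*pi*a)) - of_real (cos (2*pi*m))) / of_real (sin (2*pi*m))"

locale char_root =
  fixes a m :: real
  assumes a_pos: "0 < a"
    and m_pos: "0 < m" and m_less: "m < 1/2"
    and root: "char_fun a m = 0"
begin

abbreviation "B \<equiv> boundary_coeff a m"
abbreviation "s \<equiv> radial_exponent m"

lemma sin_2pi_m_pos: "0 < sin (2*pi*m)"
  using m_pos m_less by (intro sin_gt_zero) auto

lemma boundary_coeff_mult_sin: "B * of_real (sin (2*pi*m)) = cis (- (2*pi*a)) - of_real (cos (2*pi*m))"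
  using sin_2pi_m_pos by (simp add: boundary_coeff_def)

lemma Im_boundary_coeff: "Im B = - sin (2*pi*a) / sin (2*pi*m)"
  by (simp add: boundary_coeff_def Im_divide_of_real)

lemma trig_sol_2pi: "trig_sol m B (of_real (2*pi)) = cis (- (2*pi*a))"
  unfolding trig_sol_of_real using boundary_coeff_mult_sin by (simp add: mult.commute)

lemma magnetic_sol_0: "magnetic_sol a m B 0 = 1"
  by (simp add: magnetic_sol_def trig_sol_def)

lemma magnetic_sol_2pi: "magnetic_sol a m B (of_real (2*pi)) = 1"
  unfolding magnetic_sol_of_real trig_sol_2pi by (simp add: cis_mult mult.commute)

lemma magnetic_sol_kirchhoff:
  "magnetic_sol_deriv a m B 0 - magnetic_sol_deriv a m B (of_real (2*pi)) + of_real s = 0"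
proof -
  define A c where "A = 2*pi*a" and "c = 2*pi*m"
  define e e' S C where "e = cis A" and "e' = cis (-A)"
    and "S = (of_real (sin c) :: complex)" and "C = (of_real (cos c) :: complex)"
  have BS: "B * S = e' - C" using boundary_coeff_mult_sin by (simp add: e'_def S_def C_def A_def c_def)
  have ee: "e * e' = 1" "e + e' = 2 * of_real (cos A)"
    by (simp_all add: e_def e'_def cis_mult complex_eq_iff)
  have pyth: "C\<^sup>2 + S\<^sup>2 = 1" unfolding C_def S_def
    by (metis of_real_add of_real_power of_real_1 sin_cos_squared_add add.commute)
  have "s * sin c = 2 * m * (char_coeff m * sin c)"
    using radial_exponent_eq[of m] m_pos m_less by simp
  also have "char_coeff m * sin c = cos c - cos A"
    using root by (simp add: char_fun_def c_def A_def)
  finally have rt: "of_real s * S = 2 * of_real m * (C - of_real (cos A))"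
    unfolding S_def C_def by (metis of_real_mult of_real_diff of_real_numeral)
  have W0: "magnetic_sol_deriv a m B 0 = \<i> * of_real a + of_real m * B"
    by (simp add: magnetic_sol_deriv_def trig_sol_def trig_sol_deriv_def)
  have W2: "magnetic_sol_deriv a m B (of_real (2*pi))
      = e * (\<i> * of_real a * e' + of_real m * (B * C - S))"
    using trig_sol_2pi trig_sol_deriv_of_real[of m B "2*pi"]
    by (simp add: magnetic_sol_deriv_def cis_conv_exp e_def e'_def S_def C_def A_def c_def
        mult.commute mult.left_commute)
  have "(magnetic_sol_deriv a m B 0 - magnetic_sol_deriv a m B (of_real (2*pi)) + of_real s) * S = 0"
    unfolding W0 W2 using BS ee pyth rt by algebra
  moreover have "S \<noteq> 0" using sin_2pi_m_pos by (simp add: S_def c_def)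
  ultimately show ?thesis by simp
qed

lemma Im_trig_sol_neg:
  assumes "a < 1/2" "0 < t" "t \<le> 2*pi"
  shows "Im (trig_sol m B (of_real t)) < 0"
proof -
  have "m * t \<le> m * (2*pi)" using assms m_pos by (intro mult_left_mono) auto
  also have "\<dots> < pi" using m_less by simp
  finally have "sin (m * t) > 0" using assms m_pos by (intro sin_gt_zero) auto
  moreover have "sin (2*pi*a) > 0" using assms a_pos by (intro sin_gt_zero) auto
  ultimately show ?thesis
    using sin_2pi_m_pos by (simp add: Im_trig_sol_of_real Im_boundary_coeff mult_neg_pos)
qed

lemma magnetic_sol_nonzero:
  assumes "a < 1/2" "t \<in> {0..2*pi}"
  shows "magnetic_sol a m B (of_real t) \<noteq> 0"
proof (cases "t = 0")
  case True
  thus ?thesis by (simp add: magnetic_sol_0)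
next
  case False
  thus ?thesis using Im_trig_sol_neg[OF assms(1), of t] assms(2) by (auto simp: magnetic_sol_of_real)
qed

lemma trig_sol_half:
  assumes "a = 1/2"
  shows "trig_sol m B (of_real t) = of_real (sin (pi*m - m*t) / sin (pi*m))"
proof -
  define h where "h = pi * m"
  have "0 < h" "h < pi/2" using m_pos m_less by (auto simp: h_def)
  hence "cos h > 0" "sin h > 0" by (auto intro!: cos_gt_zero sin_gt_zero)
  have "2*pi*m = 2*h" "2*pi*a = pi" using assms by (simp_all add: h_def)
  hence "B = (cis (- pi) - of_real (2 * (cos h)\<^sup>2 - 1)) / of_real (2 * sin h * cos h)"
    unfolding boundary_coeff_def by (simp only: cos_double_cos sin_double)
  also have "\<dots> = of_real ((- 1 - (2 * (cos h)\<^sup>2 - 1)) / (2 * sin h * cos h))"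
    by (simp add: complex_eq_iff)
  also have "(- 1 - (2 * (cos h)\<^sup>2 - 1)) / (2 * sin h * cos h) = - cos h / sin h"
    using \<open>cos h > 0\<close> by (simp add: field_simps power2_eq_square)
  finally have "trig_sol m B (of_real t) = of_real (cos (m*t) - cos h / sin h * sin (m*t))"
    unfolding trig_sol_of_real by simp
  also have "cos (m*t) - cos h / sin h * sin (m*t) = sin (h - m*t) / sin h"
    using \<open>sin h > 0\<close> by (simp add: sin_diff field_simps)
  finally show ?thesis by (simp add: h_def)
qed

lemma magnetic_sol_zeros_half:
  assumes "a = 1/2"
  shows "{t\<in>{0..2*pi}. magnetic_sol a m B (of_real t) = 0} = {pi}"
proof -
  have "sin (pi*m) \<noteq> 0" using m_pos m_less by (simp add: sin_gt_zero less_imp_neq[symmetric])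
  have "magnetic_sol a m B (of_real t) = 0 \<longleftrightarrow> t = pi" if "t \<in> {0..2*pi}" for t
  proof
    assume "magnetic_sol a m B (of_real t) = 0"
    hence "sin (pi*m - m*t) = 0"
      using \<open>sin (pi*m) \<noteq> 0\<close> by (simp add: magnetic_sol_of_real trig_sol_half[OF assms])
    moreover have "0 \<le> m * t" "m * t \<le> m * (2*pi)"
      using that m_pos by (auto intro: mult_left_mono)
    moreover have "m * (2*pi) = 2 * (pi*m)" "pi*m < pi" using m_less by simp_all
    ultimately have "pi*m - m*t = 0" using m_pos sin_eq_0_pi[of "pi*m - m*t"] by linarith
    hence "m * (pi - t) = 0" by (simp add: algebra_simps)
    thus "t = pi" using m_pos by simp
  qed (simp add: magnetic_sol_of_real trig_sol_half[OF assms])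
  thus ?thesis by auto
qed

lemma magnetic_sol_inverse_norm_integral:
  assumes "a < 1/2"
  shows "((\<lambda>t. 1 / (cmod (magnetic_sol a m B (of_real t)))\<^sup>2) has_integral
           (2*pi*a / m * (sin (2*pi*m) / sin (2*pi*a)))) {0..2*pi}"
proof -
  define U V where "U t = trig_sol m B (of_real t)" and "V t = trig_sol_deriv m B (of_real t)" for t
  have U_nonpos: "U t \<notin> \<real>\<^sub>\<le>\<^sub>0" if "t \<in> {0..2*pi}" for t
  proof (cases "t = 0")
    case True
    thus ?thesis by (simp add: U_def trig_sol_def)
  next
    case False
    thus ?thesis using Im_trig_sol_neg[OF assms, of t] that
      by (auto simp: U_def complex_nonpos_Reals_iff)
  qed
  have Ln_deriv: "((\<lambda>t. Ln (U t)) has_vector_derivative inverse (U t) * V t) (at t within {0..2*pi})"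
    if "t \<in> {0..2*pi}" for t
  proof -
    have "((\<lambda>z. Ln (trig_sol m B z)) has_field_derivative inverse (U t) * V t) (at (of_real t))"
      using U_nonpos[OF that] unfolding U_def V_def
      by (auto intro!: DERIV_chain2[OF has_field_derivative_Ln] trig_sol_has_field_derivative)
    thus ?thesis unfolding U_def by (rule has_vector_derivative_real_field)
  qed
  have "((\<lambda>t. inverse (U t) * V t) has_integral Ln (U (2*pi)) - Ln (U 0)) {0..2*pi}"
    using fundamental_theorem_of_calculus[OF _ Ln_deriv] by simp
  hence "((\<lambda>t. Im (inverse (U t) * V t)) has_integral Im (Ln (U (2*pi)) - Ln (U 0))) {0..2*pi}"
    by (rule has_integral_Im)
  moreover have "Ln (U (2*pi)) = \<i> * of_real (- (2*pi*a))"
  proof -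
    define A where "A = 2*pi*a"
    have "0 < A" "A < pi" using assms a_pos by (auto simp: A_def)
    hence "Ln (exp (\<i> * of_real (- A))) = \<i> * of_real (- A)" by (intro Ln_exp) auto
    thus ?thesis unfolding U_def trig_sol_2pi cis_conv_exp A_def .
  qed
  moreover have "Ln (U 0) = 0" by (simp add: U_def trig_sol_def)
  ultimately have "((\<lambda>t. Im (inverse (U t) * V t)) has_integral - (2*pi*a)) {0..2*pi}"
    by simp
  moreover have "Im (inverse (U t) * V t) = m * Im B / (cmod (U t))\<^sup>2" for t
  proof -
    have "inverse (U t) * V t = cnj (U t) * V t / (cmod (U t))\<^sup>2"
      using complex_div_cnj[of "V t" "U t"] by (simp add: divide_inverse mult.commute)
    thus ?thesis using trig_sol_wronskian[of m B t] by (simp add: U_def V_def Im_divide_of_real)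
  qed
  ultimately have "((\<lambda>t. m * Im B / (cmod (U t))\<^sup>2) has_integral - (2*pi*a)) {0..2*pi}"
    by simp
  hence "((\<lambda>t. 1 / (m * Im B) * (m * Im B / (cmod (U t))\<^sup>2)) has_integral
      1 / (m * Im B) * (- (2*pi*a))) {0..2*pi}"
    by (rule has_integral_mult_right)
  moreover have "m * Im B \<noteq> 0"
    using m_pos assms a_pos sin_2pi_m_pos sin_gt_zero[of "2*pi*a"] by (simp add: Im_boundary_coeff)
  moreover have "1 / (m * Im B) * (- (2*pi*a)) = 2*pi*a / m * (sin (2*pi*m) / sin (2*pi*a))"
    using sin_2pi_m_pos by (simp add: Im_boundary_coeff)
  moreover have "cmod (magnetic_sol a m B (of_real t)) = cmod (U t)" for t
    by (simp add: U_def magnetic_sol_of_real norm_mult)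
  ultimately show ?thesis by simp
qed

end

theorem lemma4p3:
  fixes \<alpha> :: real
  assumes "0 < \<alpha>" and "\<alpha> \<le> 1/2"
  shows "\<exists>(\<omega>1 :: real \<Rightarrow> complex) d1 d2 (\<omega>2 :: real \<Rightarrow> complex) e1 e2.
    let lam = lambda_star \<alpha> in
    \<comment> \<open>regularity: omega1 is C^1 up to the endpoints, twice differentiable inside\<close>
    (\<forall>\<theta>\<in>{0..2*pi}. (\<omega>1 has_vector_derivative d1 \<theta>) (at \<theta> within {0..2*pi})) \<and>
    (\<forall>\<theta>\<in>{0<..<2*pi}. (d1 has_vector_derivative d2 \<theta>) (at \<theta>)) \<and>
    (\<forall>r\<in>{1..}. (\<omega>2 has_vector_derivative e1 r) (at r within {1..})) \<and>
    (\<forall>r\<in>{1<..}. (e1 has_vector_derivative e2 r) (at r)) \<and>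
    \<comment> \<open>non-trivial\<close>
    ((\<exists>\<theta>\<in>{0..2*pi}. \<omega>1 \<theta> \<noteq> 0) \<or> (\<exists>r\<in>{1..}. \<omega>2 r \<noteq> 0)) \<and>
    \<comment> \<open>(-i d/d theta - alpha)^2 omega1 = lambda omega1 on (0, 2 pi)\<close>
    (\<forall>\<theta>\<in>{0<..<2*pi}. - d2 \<theta> + 2 * \<i> * of_real \<alpha> * d1 \<theta> + of_real (\<alpha>\<^sup>2) * \<omega>1 \<theta>
        = of_real lam * \<omega>1 \<theta>) \<and>
    \<comment> \<open>- omega2'' = lambda / r^2 omega2 on (1, infinity)\<close>
    (\<forall>r\<in>{1<..}. - e2 r = of_real (lam / r\<^sup>2) * \<omega>2 r) \<and>
    \<comment> \<open>vertex conditions\<close>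
    \<omega>1 0 = \<omega>1 (2*pi) \<and> \<omega>1 (2*pi) = \<omega>2 1 \<and>
    d1 0 - d1 (2*pi) + e1 1 = 0 \<and>
    \<comment> \<open>(1) zeros\<close>
    (\<alpha> < 1/2 \<longrightarrow> (\<forall>\<theta>\<in>{0..2*pi}. \<omega>1 \<theta> \<noteq> 0) \<and> (\<forall>r\<in>{1<..}. \<omega>2 r \<noteq> 0)) \<and>
    (\<alpha> = 1/2 \<longrightarrow> {\<theta>\<in>{0..2*pi}. \<omega>1 \<theta> = 0} = {pi} \<and> (\<forall>r\<in>{1<..}. \<omega>2 r \<noteq> 0)) \<and>
    \<comment> \<open>(2) omega2 real-valued, current j constant\<close>
    (\<forall>r\<in>{1..}. Im (\<omega>2 r) = 0) \<and>
    (\<forall>\<theta>\<in>{0<..<2*pi}.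
        Re (cnj (\<omega>1 \<theta>) * (- \<i> * d1 \<theta> - of_real \<alpha> * \<omega>1 \<theta>))
        = - sqrt lam * sin (2*pi*\<alpha>) / sin (2*pi * sqrt lam)) \<and>
    \<comment> \<open>(3) integral identity\<close>
    (\<alpha> < 1/2 \<longrightarrow>
       ((\<lambda>\<theta>. 1 / (cmod (\<omega>1 \<theta>))\<^sup>2) has_integral
          (2*pi*\<alpha> / sqrt lam * (sin (2*pi * sqrt lam) / sin (2*pi*\<alpha>)))) {0..2*pi})"
proof -
  obtain m where m: "0 < m" "m < 1/2" "char_fun \<alpha> m = 0" and lam: "lambda_star \<alpha> = m\<^sup>2"
    using lambda_star_eq_root[OF assms] by blast
  interpret char_root \<alpha> m using assms m by unfold_locales
  define \<omega>1 d1 d2 where "\<omega>1 \<theta> = magnetic_sol \<alpha> m B (of_real \<theta>)"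
    and "d1 \<theta> = magnetic_sol_deriv \<alpha> m B (of_real \<theta>)"
    and "d2 \<theta> = magnetic_sol_deriv2 \<alpha> m B (of_real \<theta>)" for \<theta>
  define \<omega>2 e1 e2 where "\<omega>2 r = (of_real (r powr s) :: complex)"
    and "e1 r = (of_real (s * r powr (s - 1)) :: complex)"
    and "e2 r = (of_real (s * (s - 1) * r powr (s - 2)) :: complex)" for r
  have "(\<omega>1 has_vector_derivative d1 \<theta>) (at \<theta> within X)"
    "(d1 has_vector_derivative d2 \<theta>) (at \<theta> within X)"
    "- d2 \<theta> + 2 * \<i> * of_real \<alpha> * d1 \<theta> + of_real (\<alpha>\<^sup>2) * \<omega>1 \<theta> = of_real (m\<^sup>2) * \<omega>1 \<theta>"
    "Re (cnj (\<omega>1 \<theta>) * (- \<i> * d1 \<theta> - of_real \<alpha> * \<omega>1 \<theta>)) = - m * sin (2*pi*\<alpha>) / sin (2*pi*m)"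
    for \<theta> X
    unfolding \<omega>1_def d1_def d2_def magnetic_sol_current magnetic_sol_ode Im_boundary_coeff
    by (intro has_vector_derivative_real_field magnetic_sol_has_field_derivative
        magnetic_sol_deriv_has_field_derivative | simp)+
  moreover have "\<forall>r\<in>{1..}. (\<omega>2 has_vector_derivative e1 r) (at r within {1..})"
    "\<forall>r\<in>{1<..}. (e1 has_vector_derivative e2 r) (at r)"
    "\<forall>r\<in>{1<..}. - e2 r = of_real (m\<^sup>2 / r\<^sup>2) * \<omega>2 r"
    unfolding \<omega>2_def e1_def e2_def using m radial_exponent_quadratic[of m]
    by (intro ballI has_vector_derivative_of_real_powr has_vector_derivative_of_real_powr_deriv
        radial_power_ode; simp)+
  moreover have "\<forall>r\<in>{1..}. Im (\<omega>2 r) = 0" "\<forall>r\<in>{1<..}. \<omega>2 r \<noteq> 0"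
    by (simp_all add: \<omega>2_def)
  moreover have "\<exists>\<theta>\<in>{0..2*pi}. \<omega>1 \<theta> \<noteq> 0" "\<omega>1 0 = \<omega>1 (2*pi)" "\<omega>1 (2*pi) = \<omega>2 1"
    "d1 0 - d1 (2*pi) + e1 1 = 0"
    using magnetic_sol_0 magnetic_sol_2pi magnetic_sol_kirchhoff
    by (auto simp: \<omega>1_def \<omega>2_def d1_def e1_def intro!: bexI[of _ 0])
  moreover have "\<alpha> < 1/2 \<longrightarrow> (\<forall>\<theta>\<in>{0..2*pi}. \<omega>1 \<theta> \<noteq> 0)"
    "\<alpha> = 1/2 \<longrightarrow> {\<theta>\<in>{0..2*pi}. \<omega>1 \<theta> = 0} = {pi}"
    "\<alpha> < 1/2 \<longrightarrow> ((\<lambda>\<theta>. 1 / (cmod (\<omega>1 \<theta>))\<^sup>2) has_integral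
       (2*pi*\<alpha> / m * (sin (2*pi*m) / sin (2*pi*\<alpha>)))) {0..2*pi}"
    unfolding \<omega>1_def using magnetic_sol_nonzero magnetic_sol_zeros_half magnetic_sol_inverse_norm_integral
    by blast+
  moreover have sqrt_m: "sqrt (m\<^sup>2) = m" using m by simp
  ultimately show ?thesis
    unfolding Let_def lam sqrt_m
    by - (rule exI[of _ \<omega>1], rule exI[of _ d1], rule exI[of _ d2],
        rule exI[of _ \<omega>2], rule exI[of _ e1], rule exI[of _ e2], blast)
qed

end
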